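(* Assume Assumption 1 and Assumption 2 with $\delta>1/10$. For any distinct $u,u_1,u_2\in L$, as $n_R\to\infty$, $$\Pr[(u,u_1),(u,u_2),(u_1,u_2)\in E\mid S_L,S_R]=p_{uu_1}p_{uu_2}\cdot\frac{M_{R1}M_{R3}}{M_{R2}^2}\cdot\frac1{w_u}\,(1+o(1))+o(p_{uu_1}p_{uu_2}),$$ where $p_{xy}=\frac{M_{R2}}{M_{R1}^2}\cdot\frac{w_xw_y}{n_R}$.
   Context: Model: left nodes $L$ ($|L|=n_L$), right nodes $R$ ($|R|=n_R$), weight sequences $S_L=(w_u)_{u\in L}$, $S_R=(w_v)_{v\in R}$ of positive reals; $M_{Lk}=\frac1{n_L}\sum_{u\in L}w_u^k$, $M_{Rk}=\frac1{n_R}\sum_{v\in R}w_v^k$. The random bipartite graph $G_b=(L\sqcup R,E_b)$ contains each edge $(u,v)$, $u\in L$, $v\in R$, independently with probability $\min\left(\frac{w_uw_v}{n_RM_{R1}},1\right)$. The projected graph is $G=(L,E)$ with $(u,u')\in E$ for distinct $u,u'\in L$ iff there is $z\in R$ with $(u,z),(u',z)\in E_b$. Assumption 1: $\frac{w_uw_v}{n_RM_{R1}}\le1$ for all $u\in L,v\in R$. Assumption 2 (parameter $\delta>0$), as $n_L,n_R\to\infty$: $\max(S_L\cup S_R)=O(n_R^{1/2-\delta})$, $\min S_L=\Omega(1)$, $M_{R2}=O(M_{R1}^2)$, $M_{R4}=O(n_R^{1-2\delta})$. *)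

theory Defs
  imports "HOL-Probability.Probability" "HOL-Library.Landau_Symbols"
begin

definition moment :: "'a set \<Rightarrow> ('a \<Rightarrow> real) \<Rightarrow> nat \<Rightarrow> real" where
  "moment A w k = (1 / real (card A)) * (\<Sum>x\<in>A. w x ^ k)"

definition bip_prob :: "'b set \<Rightarrow> ('a \<Rightarrow> real) \<Rightarrow> ('b \<Rightarrow> real) \<Rightarrow> 'a \<Rightarrow> 'b \<Rightarrow> real" where
  "bip_prob R wL wR u v = min (wL u * wR v / (real (card R) * moment R wR 1)) 1"

definition bip_graph :: "'a set \<Rightarrow> 'b set \<Rightarrow> ('a \<Rightarrow> real) \<Rightarrow> ('b \<Rightarrow> real) \<Rightarrow> ('a \<times> 'b \<Rightarrow> bool) pmf" where
  "bip_graph L R wL wR = Pi_pmf (L \<times> R) False (\<lambda>(u, v). bernoulli_pmf (bip_prob R wL wR u v))"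

definition proj_edge :: "'b set \<Rightarrow> ('a \<times> 'b \<Rightarrow> bool) \<Rightarrow> 'a \<Rightarrow> 'a \<Rightarrow> bool" where
  "proj_edge R Eb u u' \<longleftrightarrow> u \<noteq> u' \<and> (\<exists>z\<in>R. Eb (u, z) \<and> Eb (u', z))"

definition triangle_prob :: "'a set \<Rightarrow> 'b set \<Rightarrow> ('a \<Rightarrow> real) \<Rightarrow> ('b \<Rightarrow> real) \<Rightarrow> 'a \<Rightarrow> 'a \<Rightarrow> 'a \<Rightarrow> real" where
  "triangle_prob L R wL wR u u1 u2 =
     measure_pmf.prob (bip_graph L R wL wR)
       {Eb. proj_edge R Eb u u1 \<and> proj_edge R Eb u u2 \<and> proj_edge R Eb u1 u2}"

definition proj_p :: "'b set \<Rightarrow> ('a \<Rightarrow> real) \<Rightarrow> ('b \<Rightarrow> real) \<Rightarrow> 'a \<Rightarrow> 'a \<Rightarrow> real" where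
  "proj_p R wL wR x y = moment R wR 2 / (moment R wR 1)^2 * (wL x * wL y / real (card R))"

end

theory Submission
  imports Defs
begin

text \<open>
  Under Assumption 1 the edge probabilities are exactly \<open>q(x,z) = w_x w_z / (n_R M_R1)\<close>, hence
  \<open>\<Sum>_z q(x,z) q(y,z) = p_xy\<close>, and the expected number of common neighbours of \<open>u, u1, u2\<close> is
  \<open>\<Sum>_z q(u,z) q(u1,z) q(u2,z) = p_uu1 p_uu2 M_R1 M_R3 / (M_R2\<^sup>2 w_u)\<close>.  A triangle of the
  projected graph either has a common neighbour of all three vertices, or its three edges are
  witnessed by three distinct right nodes.  Second-order Bonferroni bounds the probability of the
  first event from below, and the union bound over both kinds of witnesses bounds the triangle
  probability from above; both errors are at most \<open>p_uu1 p_uu2 max q\<^sup>2\<close>.  The maximum-weight bound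
  and \<open>M_R2 = O(M_R1\<^sup>2)\<close> give \<open>max q\<^sup>2 = O(n_R^(-2\<delta>))\<close>.
\<close>

lemma (in finite_measure) measure_UN_ge_sum_minus_pairwise:
  assumes "finite I" and "A ` I \<subseteq> sets M"
  shows "measure M (\<Union>i\<in>I. A i) \<ge> (\<Sum>i\<in>I. measure M (A i))
          - (\<Sum>i\<in>I. \<Sum>j\<in>I - {i}. measure M (A i \<inter> A j))"
  using assms
proof (induction I rule: finite_induct)
  case empty
  then show ?case by simp
next
  case (insert a I)
  let ?\<mu> = "measure M"
  let ?U = "\<Union>i\<in>I. A i"
  have sets: "A a \<in> sets M" "?U \<in> sets M" "\<And>i. i \<in> I \<Longrightarrow> A a \<inter> A i \<in> sets M"
    using insert.prems insert.hyps(1) by auto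
  have "?\<mu> (A a \<union> ?U) = ?\<mu> (A a) + ?\<mu> ?U - ?\<mu> (?U \<inter> A a)"
    using finite_measure_Union'[OF sets(1,2)] finite_measure_Diff'[OF sets(2,1)] by simp
  moreover have "?\<mu> (?U \<inter> A a) \<le> (\<Sum>j\<in>I. ?\<mu> (A a \<inter> A j))"
  proof -
    have "?U \<inter> A a = (\<Union>j\<in>I. A a \<inter> A j)" by blast
    then show ?thesis
      using finite_measure_subadditive_finite[OF insert.hyps(1), of "\<lambda>j. A a \<inter> A j"] sets(3)
      by auto
  qed
  moreover have "(\<Sum>i\<in>insert a I. \<Sum>j\<in>insert a I - {i}. ?\<mu> (A i \<inter> A j))
      = (\<Sum>j\<in>I. ?\<mu> (A a \<inter> A j)) + (\<Sum>i\<in>I. ?\<mu> (A i \<inter> A a))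
        + (\<Sum>i\<in>I. \<Sum>j\<in>I - {i}. ?\<mu> (A i \<inter> A j))"
  proof -
    have "insert a I - {i} = insert a (I - {i})" if "i \<in> I" for i
      using that insert.hyps(2) by auto
    then have "(\<Sum>j\<in>insert a I - {i}. ?\<mu> (A i \<inter> A j))
        = ?\<mu> (A i \<inter> A a) + (\<Sum>j\<in>I - {i}. ?\<mu> (A i \<inter> A j))" if "i \<in> I" for i
      using that insert.hyps by simp
    moreover have "insert a I - {a} = I" using insert.hyps(2) by auto
    ultimately show ?thesis
      using insert.hyps by (simp add: sum.distrib)
  qed
  moreover have "0 \<le> (\<Sum>i\<in>I. ?\<mu> (A i \<inter> A a))" by (simp add: sum_nonneg)
  ultimately show ?case
    using insert by simp
qed

lemma prob_Pi_pmf_bernoulli_all: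
  assumes "finite E" and "S \<subseteq> E" and "\<And>e. e \<in> E \<Longrightarrow> 0 \<le> q e \<and> q e \<le> 1"
  shows "measure_pmf.prob (Pi_pmf E False (\<lambda>e. bernoulli_pmf (q e))) {f. \<forall>e\<in>S. f e}
         = (\<Prod>e\<in>S. q e)"
proof -
  let ?B = "\<lambda>e. if e \<in> S then {True} else UNIV"
  have "{f. \<forall>e\<in>S. f e} = Pi E ?B" using assms(2) by (auto simp: Pi_def)
  then have "measure_pmf.prob (Pi_pmf E False (\<lambda>e. bernoulli_pmf (q e))) {f. \<forall>e\<in>S. f e}
       = (\<Prod>e\<in>E. measure_pmf.prob (bernoulli_pmf (q e)) (?B e))"
    using assms(1) by (simp add: measure_Pi_pmf_Pi)
  also have "\<dots> = (\<Prod>e\<in>E. if e \<in> S then q e else 1)"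
    using assms(3) by (intro prod.cong refl) (auto simp: measure_pmf_single)
  also have "\<dots> = (\<Prod>e\<in>S. q e)"
    using assms(1,2) by (simp add: prod.If_cases Int_absorb1)
  finally show ?thesis .
qed

definition proj_triangle :: "'b set \<Rightarrow> 'a \<Rightarrow> 'a \<Rightarrow> 'a \<Rightarrow> ('a \<times> 'b \<Rightarrow> bool) set" where
  "proj_triangle R u u1 u2 = {Eb. proj_edge R Eb u u1 \<and> proj_edge R Eb u u2 \<and> proj_edge R Eb u1 u2}"

locale random_bipartite =
  fixes L :: "'a set" and R :: "'b set" and q :: "'a \<Rightarrow> 'b \<Rightarrow> real"
  assumes finite_L: "finite L" and finite_R: "finite R"
    and q_nonneg: "\<And>x z. x \<in> L \<Longrightarrow> z \<in> R \<Longrightarrow> 0 \<le> q x z"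
    and q_le_1: "\<And>x z. x \<in> L \<Longrightarrow> z \<in> R \<Longrightarrow> q x z \<le> 1"
begin

definition graph :: "('a \<times> 'b \<Rightarrow> bool) pmf" where
  "graph = Pi_pmf (L \<times> R) False (\<lambda>(x, z). bernoulli_pmf (q x z))"

abbreviation P :: "('a \<times> 'b \<Rightarrow> bool) set \<Rightarrow> real" where
  "P \<equiv> measure_pmf.prob graph"

lemma prob_edges_present:
  assumes "S \<subseteq> L \<times> R"
  shows "P {Eb. \<forall>e\<in>S. Eb e} = (\<Prod>(x, z)\<in>S. q x z)"
proof -
  have "graph = Pi_pmf (L \<times> R) False (\<lambda>e. bernoulli_pmf (case_prod q e))"
    unfolding graph_def by (simp add: case_prod_beta')
  then show ?thesis
    using prob_Pi_pmf_bernoulli_all[OF _ assms] finite_L finite_R q_nonneg q_le_1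
    by (auto simp: case_prod_beta')
qed

end

locale random_bipartite_triple = random_bipartite +
  fixes u u1 u2 :: 'a
  assumes in_L: "u \<in> L" "u1 \<in> L" "u2 \<in> L"
    and distinct: "u \<noteq> u1" "u \<noteq> u2" "u1 \<noteq> u2"
begin

definition common_nbr :: "'b \<Rightarrow> ('a \<times> 'b \<Rightarrow> bool) set" where
  "common_nbr z = {Eb. \<forall>e\<in>{(u, z), (u1, z), (u2, z)}. Eb e}"

lemma prob_common_nbr:
  assumes "z \<in> R"
  shows "P (common_nbr z) = q u z * q u1 z * q u2 z"
  unfolding common_nbr_def using assms in_L distinct
  by (subst prob_edges_present) auto

lemma prob_common_nbr_Int:
  assumes "z \<in> R" "z' \<in> R" "z \<noteq> z'"
  shows "P (common_nbr z \<inter> common_nbr z') = (q u z * q u1 z * q u2 z) * (q u z' * q u1 z' * q u2 z')"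
proof -
  have "common_nbr z \<inter> common_nbr z'
      = {Eb. \<forall>e\<in>{(u, z), (u1, z), (u2, z), (u, z'), (u1, z'), (u2, z')}. Eb e}"
    unfolding common_nbr_def by auto
  also have "P \<dots> = (\<Prod>(x, y)\<in>{(u, z), (u1, z), (u2, z), (u, z'), (u1, z'), (u2, z')}. q x y)"
    using assms in_L by (intro prob_edges_present) auto
  finally show ?thesis
    using assms distinct by simp
qed

lemma triangle_prob_ge:
  assumes "\<And>z. z \<in> R \<Longrightarrow> q u1 z \<le> b" "\<And>z. z \<in> R \<Longrightarrow> q u2 z \<le> b"
  shows "(\<Sum>z\<in>R. q u z * q u1 z * q u2 z)
           - b^2 * (\<Sum>z\<in>R. q u z * q u1 z) * (\<Sum>z\<in>R. q u z * q u2 z)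
         \<le> P (proj_triangle R u u1 u2)"
proof -
  define r where "r z = q u z * q u1 z * q u2 z" for z
  have r_nonneg: "0 \<le> r z" if "z \<in> R" for z
    using that in_L q_nonneg by (simp add: r_def)
  have "(\<Sum>z\<in>R. \<Sum>z'\<in>R - {z}. P (common_nbr z \<inter> common_nbr z'))
      = (\<Sum>z\<in>R. \<Sum>z'\<in>R - {z}. r z * r z')"
    by (intro sum.cong refl) (auto simp: prob_common_nbr_Int r_def)
  then have "(\<Sum>z\<in>R. r z) - (\<Sum>z\<in>R. \<Sum>z'\<in>R - {z}. r z * r z') \<le> P (\<Union>z\<in>R. common_nbr z)"
    using measure_pmf.measure_UN_ge_sum_minus_pairwise[where M=graph and A=common_nbr, OF finite_R]
    by (simp add: prob_common_nbr r_def)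
  also have "\<dots> \<le> P (proj_triangle R u u1 u2)"
    using distinct by (intro measure_pmf.finite_measure_mono)
      (auto simp: common_nbr_def proj_triangle_def proj_edge_def)
  finally have "(\<Sum>z\<in>R. r z) - (\<Sum>z\<in>R. \<Sum>z'\<in>R - {z}. r z * r z') \<le> P (proj_triangle R u u1 u2)" .
  moreover have "(\<Sum>z\<in>R. \<Sum>z'\<in>R - {z}. r z * r z') \<le> (\<Sum>z\<in>R. r z) * (\<Sum>z\<in>R. r z)"
  proof -
    have "(\<Sum>z\<in>R. \<Sum>z'\<in>R - {z}. r z * r z') \<le> (\<Sum>z\<in>R. \<Sum>z'\<in>R. r z * r z')"
      using finite_R r_nonneg by (intro sum_mono sum_mono2) auto
    then show ?thesis by (simp add: sum_product)
  qed
  moreover have "(\<Sum>z\<in>R. r z) * (\<Sum>z\<in>R. r z)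
      \<le> (b * (\<Sum>z\<in>R. q u z * q u1 z)) * (b * (\<Sum>z\<in>R. q u z * q u2 z))"
  proof -
    have "(\<Sum>z\<in>R. r z) \<le> b * (\<Sum>z\<in>R. q u z * q u1 z)"
      unfolding sum_distrib_left r_def
      using assms(2) in_L q_nonneg by (intro sum_mono) (simp add: mult_left_mono mult.commute[of b])
    moreover have "(\<Sum>z\<in>R. r z) \<le> b * (\<Sum>z\<in>R. q u z * q u2 z)"
      unfolding sum_distrib_left r_def
      using assms(1) in_L q_nonneg mult_left_mono[of "q u1 _" b "q u _ * q u2 _"]
      by (intro sum_mono) (simp add: mult_ac)
    moreover have "0 \<le> (\<Sum>z\<in>R. r z)" by (simp add: sum_nonneg r_nonneg)
    ultimately show ?thesis by (intro mult_mono) auto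
  qed
  ultimately show ?thesis
    by (simp add: r_def power2_eq_square mult_ac)
qed

definition pairwise_nbrs :: "'b \<Rightarrow> 'b \<Rightarrow> 'b \<Rightarrow> ('a \<times> 'b \<Rightarrow> bool) set" where
  "pairwise_nbrs z z' z'' =
     {Eb. \<forall>e\<in>{(u, z), (u1, z), (u, z'), (u2, z'), (u1, z''), (u2, z'')}. Eb e}"

lemma proj_triangle_subset:
  "proj_triangle R u u1 u2 \<subseteq> (\<Union>z\<in>R. common_nbr z)
     \<union> (\<Union>(z, z', z'')\<in>{(z, z', z''). z \<in> R \<and> z' \<in> R \<and> z'' \<in> R \<and> distinct [z, z', z'']}.
          pairwise_nbrs z z' z'')"
proof
  fix Eb assume "Eb \<in> proj_triangle R u u1 u2"
  then obtain z z' z'' where "z \<in> R" "Eb (u, z)" "Eb (u1, z)" and "z' \<in> R" "Eb (u, z')" "Eb (u2, z')"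
    and "z'' \<in> R" "Eb (u1, z'')" "Eb (u2, z'')"
    by (auto simp: proj_triangle_def proj_edge_def)
  then show "Eb \<in> (\<Union>z\<in>R. common_nbr z)
     \<union> (\<Union>(z, z', z'')\<in>{(z, z', z''). z \<in> R \<and> z' \<in> R \<and> z'' \<in> R \<and> distinct [z, z', z'']}.
          pairwise_nbrs z z' z'')"
    by (cases "distinct [z, z', z'']") (auto simp: common_nbr_def pairwise_nbrs_def)
qed

lemma prob_pairwise_nbrs:
  assumes "z \<in> R" "z' \<in> R" "z'' \<in> R" "distinct [z, z', z'']"
  shows "P (pairwise_nbrs z z' z'') = (q u z * q u1 z) * (q u z' * q u2 z') * (q u1 z'' * q u2 z'')"
  unfolding pairwise_nbrs_def using assms in_L distinct
  by (subst prob_edges_present) auto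

lemma triangle_prob_le:
  "P (proj_triangle R u u1 u2)
     \<le> (\<Sum>z\<in>R. q u z * q u1 z * q u2 z)
       + (\<Sum>z\<in>R. q u z * q u1 z) * (\<Sum>z\<in>R. q u z * q u2 z) * (\<Sum>z\<in>R. q u1 z * q u2 z)"
proof -
  define T where "T = {(z, z', z''). z \<in> R \<and> z' \<in> R \<and> z'' \<in> R \<and> distinct [z, z', z'']}"
  define g where "g = (\<lambda>(z, z', z''). (q u z * q u1 z) * (q u z' * q u2 z') * (q u1 z'' * q u2 z''))"
  have T_sub: "T \<subseteq> R \<times> R \<times> R" by (auto simp: T_def)
  then have finite_T: "finite T" using finite_R finite_subset by blast
  let ?W = "\<lambda>(z, z', z''). pairwise_nbrs z z' z''"
  have "P (proj_triangle R u u1 u2) \<le> P ((\<Union>z\<in>R. common_nbr z) \<union> (\<Union>t\<in>T. ?W t))"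
    using proj_triangle_subset unfolding T_def by (intro measure_pmf.finite_measure_mono) auto
  also have "\<dots> \<le> P (\<Union>z\<in>R. common_nbr z) + P (\<Union>t\<in>T. ?W t)"
    by (rule measure_Un_le) simp_all
  also have "P (\<Union>z\<in>R. common_nbr z) \<le> (\<Sum>z\<in>R. P (common_nbr z))"
    using finite_R by (intro measure_pmf.finite_measure_subadditive_finite) auto
  also have "\<dots> = (\<Sum>z\<in>R. q u z * q u1 z * q u2 z)"
    by (simp add: prob_common_nbr)
  also have "P (\<Union>t\<in>T. ?W t) \<le> (\<Sum>t\<in>T. P (?W t))"
    using finite_T by (intro measure_pmf.finite_measure_subadditive_finite) auto
  also have "\<dots> = (\<Sum>t\<in>T. g t)"
    by (intro sum.cong refl) (auto simp: T_def g_def prob_pairwise_nbrs)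
  also have "\<dots> \<le> (\<Sum>t\<in>R \<times> R \<times> R. g t)"
    using T_sub finite_R in_L q_nonneg by (intro sum_mono2) (auto simp: g_def)
  also have "\<dots> = (\<Sum>z\<in>R. \<Sum>z'\<in>R. \<Sum>z''\<in>R. (q u z * q u1 z) * (q u z' * q u2 z') * (q u1 z'' * q u2 z''))"
    by (simp add: g_def sum.cartesian_product)
  also have "\<dots> = (\<Sum>z\<in>R. (q u z * q u1 z) * (\<Sum>z'\<in>R. (q u z' * q u2 z') * (\<Sum>z''\<in>R. q u1 z'' * q u2 z'')))"
    by (simp only: sum_distrib_left mult.assoc)
  also have "\<dots> = (\<Sum>z\<in>R. q u z * q u1 z) * (\<Sum>z\<in>R. q u z * q u2 z) * (\<Sum>z\<in>R. q u1 z * q u2 z)"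
    by (simp only: sum_distrib_right mult.assoc)
  finally show ?thesis by simp
qed

end

locale weighted_bipartite =
  fixes L :: "'a set" and R :: "'b set" and wL :: "'a \<Rightarrow> real" and wR :: "'b \<Rightarrow> real"
  assumes finite_L: "finite L" and finite_R: "finite R" and R_nonempty: "R \<noteq> {}"
    and wL_pos: "\<And>x. x \<in> L \<Longrightarrow> wL x > 0"
    and wR_pos: "\<And>v. v \<in> R \<Longrightarrow> wR v > 0"
    and weight_product_le: "\<And>x v. x \<in> L \<Longrightarrow> v \<in> R \<Longrightarrow>
           wL x * wR v / (real (card R) * moment R wR 1) \<le> 1"
begin

lemma card_R_pos: "real (card R) > 0"
  using finite_R R_nonempty by (simp add: card_gt_0_iff)

lemma sum_power_pos: "(\<Sum>v\<in>R. wR v ^ k) > 0"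
  using finite_R R_nonempty wR_pos by (intro sum_pos) auto

lemma card_R_mult_moment: "real (card R) * moment R wR k = (\<Sum>v\<in>R. wR v ^ k)"
  using card_R_pos by (simp add: moment_def)

lemma bip_prob_eq:
  assumes "x \<in> L" "z \<in> R"
  shows "bip_prob R wL wR x z = wL x * wR z / (\<Sum>v\<in>R. wR v)"
  using weight_product_le[OF assms] card_R_mult_moment[of 1]
  by (simp add: bip_prob_def min_def)

sublocale random_bipartite L R "bip_prob R wL wR"
proof
  fix x z assume "x \<in> L" "z \<in> R"
  then show "0 \<le> bip_prob R wL wR x z"
    using wL_pos wR_pos sum_power_pos[of 1] by (simp add: bip_prob_eq less_imp_le)
  show "bip_prob R wL wR x z \<le> 1" by (simp add: bip_prob_def)
qed (fact finite_L finite_R)+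

lemma graph_eq_bip_graph: "graph = bip_graph L R wL wR"
  by (simp add: graph_def bip_graph_def)

lemma proj_p_eq: "proj_p R wL wR x y = wL x * wL y * (\<Sum>v\<in>R. wR v ^ 2) / (\<Sum>v\<in>R. wR v) ^ 2"
  using card_R_pos by (simp add: proj_p_def moment_def field_simps power2_eq_square)

lemma proj_p_nonneg:
  assumes "x \<in> L" "y \<in> L"
  shows "0 \<le> proj_p R wL wR x y"
  using assms wL_pos sum_power_pos[of 2] by (simp add: proj_p_eq less_imp_le)

lemma sum_bip_prob_pair:
  assumes "x \<in> L" "y \<in> L"
  shows "(\<Sum>z\<in>R. bip_prob R wL wR x z * bip_prob R wL wR y z) = proj_p R wL wR x y"
proof -
  have "(\<Sum>z\<in>R. bip_prob R wL wR x z * bip_prob R wL wR y z)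
      = (\<Sum>z\<in>R. wL x * wL y / (\<Sum>v\<in>R. wR v) ^ 2 * wR z ^ 2)"
    using assms by (intro sum.cong refl) (simp add: bip_prob_eq power2_eq_square)
  then show ?thesis
    by (simp add: proj_p_eq sum_distrib_left sum_divide_distrib)
qed

lemma sum_bip_prob_triple:
  assumes "u \<in> L" "u1 \<in> L" "u2 \<in> L"
  shows "(\<Sum>z\<in>R. bip_prob R wL wR u z * bip_prob R wL wR u1 z * bip_prob R wL wR u2 z)
       = proj_p R wL wR u u1 * proj_p R wL wR u u2
         * (moment R wR 1 * moment R wR 3 / (moment R wR 2)^2) * (1 / wL u)"
proof -
  have "(\<Sum>z\<in>R. bip_prob R wL wR u z * bip_prob R wL wR u1 z * bip_prob R wL wR u2 z)
      = (\<Sum>z\<in>R. wL u * wL u1 * wL u2 / (\<Sum>v\<in>R. wR v) ^ 3 * wR z ^ 3)"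
    using assms by (intro sum.cong refl) (simp add: bip_prob_eq power3_eq_cube)
  also have "\<dots> = wL u * wL u1 * wL u2 * (\<Sum>v\<in>R. wR v ^ 3) / (\<Sum>v\<in>R. wR v) ^ 3"
    by (simp add: sum_distrib_left sum_divide_distrib)
  finally show ?thesis
    using assms wL_pos card_R_pos sum_power_pos[of 1] sum_power_pos[of 2]
    by (simp add: proj_p_def moment_def field_simps power2_eq_square power3_eq_cube)
qed


context
  fixes X K :: real
  assumes wL_le: "\<And>x. x \<in> L \<Longrightarrow> wL x \<le> X"
    and moment_2_le: "moment R wR 2 \<le> K * (moment R wR 1)^2"
begin

lemma sum_sq_le: "(\<Sum>v\<in>R. wR v ^ 2) \<le> K * (\<Sum>v\<in>R. wR v) ^ 2 / real (card R)"
  using moment_2_le card_R_pos by (simp add: moment_def field_simps power2_eq_square)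

lemma bip_prob_sq_le:
  assumes "x \<in> L" "z \<in> R"
  shows "bip_prob R wL wR x z ^ 2 \<le> X^2 * K / real (card R)"
proof -
  have "bip_prob R wL wR x z ^ 2 = wL x ^ 2 * wR z ^ 2 / (\<Sum>v\<in>R. wR v) ^ 2"
    using assms by (simp add: bip_prob_eq power_divide power_mult_distrib)
  also have "\<dots> \<le> X^2 * (K * (\<Sum>v\<in>R. wR v) ^ 2 / real (card R)) / (\<Sum>v\<in>R. wR v) ^ 2"
  proof (intro divide_right_mono mult_mono)
    show "wL x ^ 2 \<le> X ^ 2"
      using assms wL_le wL_pos by (intro power_mono) (auto simp: less_imp_le)
    have "wR z ^ 2 \<le> (\<Sum>v\<in>R. wR v ^ 2)"
      using assms finite_R by (intro member_le_sum) auto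
    then show "wR z ^ 2 \<le> K * (\<Sum>v\<in>R. wR v) ^ 2 / real (card R)"
      using sum_sq_le by linarith
  qed auto
  also have "\<dots> = X^2 * K / real (card R)"
    using sum_power_pos[of 1] by simp
  finally show ?thesis .
qed

lemma proj_p_le:
  assumes "x \<in> L" "y \<in> L"
  shows "proj_p R wL wR x y \<le> X^2 * K / real (card R)"
proof -
  have "0 \<le> X" using wL_le[OF assms(1)] wL_pos[OF assms(1)] by linarith
  then have "wL x * wL y \<le> X * X"
    using assms wL_le wL_pos by (intro mult_mono) (auto simp: less_imp_le)
  moreover have "(\<Sum>v\<in>R. wR v ^ 2) / (\<Sum>v\<in>R. wR v) ^ 2 \<le> K / real (card R)"
    using sum_sq_le sum_power_pos[of 1] card_R_pos by (simp add: field_simps)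
  ultimately have "(wL x * wL y) * ((\<Sum>v\<in>R. wR v ^ 2) / (\<Sum>v\<in>R. wR v) ^ 2) \<le> (X * X) * (K / real (card R))"
    by (rule mult_mono) (use sum_power_pos[of 2] in \<open>auto simp: less_imp_le\<close>)
  then show ?thesis
    by (simp add: proj_p_eq power2_eq_square)
qed


lemma triangle_prob_approx:
  assumes "u \<in> L" "u1 \<in> L" "u2 \<in> L" and "u \<noteq> u1" "u \<noteq> u2" "u1 \<noteq> u2"
  shows "\<bar>triangle_prob L R wL wR u u1 u2
           - proj_p R wL wR u u1 * proj_p R wL wR u u2
             * (moment R wR 1 * moment R wR 3 / (moment R wR 2)^2) * (1 / wL u)\<bar>
         \<le> proj_p R wL wR u u1 * proj_p R wL wR u u2 * (X^2 * K / real (card R))"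
    (is "\<bar>?T - ?main\<bar> \<le> ?p1 * ?p2 * ?B")
proof -
  interpret random_bipartite_triple L R "bip_prob R wL wR" u u1 u2
    using assms by unfold_locales
  have "0 \<le> ?B"
    using bip_prob_sq_le[OF assms(1)] R_nonempty by (meson all_not_in_conv order_trans zero_le_power2)
  define b where "b = sqrt ?B"
  have "b^2 = ?B" using \<open>0 \<le> ?B\<close> by (simp add: b_def)
  have bip_prob_le_b: "bip_prob R wL wR x z \<le> b" if "x \<in> L" "z \<in> R" for x z
    unfolding b_def using bip_prob_sq_le[OF that] by (simp add: real_le_rsqrt)
  have T_eq: "?T = P (proj_triangle R u u1 u2)"
    by (simp add: triangle_prob_def proj_triangle_def graph_eq_bip_graph)
  have "?main - ?B * (?p1 * ?p2) \<le> ?T"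
    using triangle_prob_ge[of b] bip_prob_le_b assms
    unfolding T_eq sum_bip_prob_pair[OF assms(1,2)] sum_bip_prob_pair[OF assms(1,3)]
      sum_bip_prob_triple[OF assms(1-3)] \<open>b^2 = ?B\<close>
    by (simp add: mult_ac)
  moreover have "?T \<le> ?main + ?p1 * ?p2 * proj_p R wL wR u1 u2"
    using triangle_prob_le
    unfolding T_eq sum_bip_prob_pair[OF assms(1,2)] sum_bip_prob_pair[OF assms(1,3)]
      sum_bip_prob_pair[OF assms(2,3)] sum_bip_prob_triple[OF assms(1-3)] .
  moreover have "?p1 * ?p2 * proj_p R wL wR u1 u2 \<le> ?p1 * ?p2 * ?B"
    using assms by (intro mult_left_mono proj_p_le) (simp_all add: proj_p_nonneg)
  ultimately show ?thesis
    by (simp add: abs_le_iff mult_ac)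
qed

end

end

lemma smallo_of_le_mult_vanishing:
  fixes f g h :: "'a \<Rightarrow> real"
  assumes "eventually (\<lambda>n. \<bar>f n\<bar> \<le> g n * h n) F" "eventually (\<lambda>n. 0 \<le> g n) F" "(h \<longlongrightarrow> 0) F"
  shows "f \<in> o[F](g)"
proof (rule landau_o.smallI)
  fix c :: real assume "c > 0"
  with assms(3) have "eventually (\<lambda>n. h n < c) F" by (rule order_tendstoD(2))
  with assms(1,2) show "eventually (\<lambda>n. norm (f n) \<le> c * norm (g n)) F"
  proof eventually_elim
    case (elim n)
    then have "g n * h n \<le> g n * c" by (intro mult_left_mono) auto
    with elim show ?case by (simp add: mult.commute)
  qed
qed

lemma tendsto_powr_sq_div_zero:
  fixes N :: "'a \<Rightarrow> real"
  assumes "filterlim N at_top F" and "\<delta> > 0"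
  shows "((\<lambda>n. (C * N n powr (1/2 - \<delta>))^2 * K / N n) \<longlongrightarrow> 0) F"
proof -
  have "((\<lambda>n. C^2 * K * N n powr (-2 * \<delta>)) \<longlongrightarrow> C^2 * K * 0) F"
    using assms by (intro tendsto_mult tendsto_const tendsto_neg_powr) auto
  moreover have "eventually (\<lambda>n. C^2 * K * N n powr (-2 * \<delta>) = (C * N n powr (1/2 - \<delta>))^2 * K / N n) F"
    using filterlim_at_top_dense[THEN iffD1, OF assms(1), rule_format, of 0]
  proof eventually_elim
    case (elim n)
    then have "(N n powr (1/2 - \<delta>))^2 = N n powr (-2 * \<delta> + 1)"
      by (simp add: powr_power algebra_simps)
    also have "\<dots> = N n powr (-2 * \<delta>) * N n"
      using elim by (simp only: powr_add powr_one)
    finally have "(N n powr (1/2 - \<delta>))^2 = N n powr (-2 * \<delta>) * N n" .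
    with elim show ?case by (simp add: power_mult_distrib)
  qed
  ultimately show ?thesis by (simp add: tendsto_cong)
qed

theorem mainTheorem8:
  fixes L :: "nat \<Rightarrow> 'a set" and R :: "nat \<Rightarrow> 'b set"
    and wL :: "nat \<Rightarrow> 'a \<Rightarrow> real" and wR :: "nat \<Rightarrow> 'b \<Rightarrow> real"
    and \<delta> :: real
    and u u1 u2 :: "nat \<Rightarrow> 'a"
  assumes finL: "\<And>n. finite (L n)" and finR: "\<And>n. finite (R n)"
    and posL: "\<And>n x. x \<in> L n \<Longrightarrow> wL n x > 0"
    and posR: "\<And>n v. v \<in> R n \<Longrightarrow> wR n v > 0"
    \<comment> \<open>Assumption 1\<close>
    and A1: "\<And>n x v. x \<in> L n \<Longrightarrow> v \<in> R n \<Longrightarrow>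
               wL n x * wR n v / (real (card (R n)) * moment (R n) (wR n) 1) \<le> 1"
    \<comment> \<open>Assumption 2 with parameter \<delta> > 1/10, as n_L, n_R \<rightarrow> \<infinity>\<close>
    and delta: "\<delta> > 1/10"
    and nL_inf: "filterlim (\<lambda>n. card (L n)) at_top at_top"
    and nR_inf: "filterlim (\<lambda>n. card (R n)) at_top at_top"
    and A2_max: "(\<lambda>n. Max (wL n ` L n \<union> wR n ` R n))
                   \<in> O(\<lambda>n. real (card (R n)) powr (1/2 - \<delta>))"
    and A2_min: "(\<lambda>n. Min (wL n ` L n)) \<in> \<Omega>(\<lambda>n. 1)"
    and A2_M2: "(\<lambda>n. moment (R n) (wR n) 2) \<in> O(\<lambda>n. (moment (R n) (wR n) 1)^2)"
    and A2_M4: "(\<lambda>n. moment (R n) (wR n) 4) \<in> O(\<lambda>n. real (card (R n)) powr (1 - 2 * \<delta>))"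
    and uL: "\<And>n. u n \<in> L n" and u1L: "\<And>n. u1 n \<in> L n" and u2L: "\<And>n. u2 n \<in> L n"
    and dist: "\<And>n. u n \<noteq> u1 n \<and> u n \<noteq> u2 n \<and> u1 n \<noteq> u2 n"
  shows "\<exists>\<epsilon> \<eta>. \<epsilon> \<in> o(\<lambda>n. 1)
     \<and> \<eta> \<in> o(\<lambda>n. proj_p (R n) (wL n) (wR n) (u n) (u1 n) * proj_p (R n) (wL n) (wR n) (u n) (u2 n))
     \<and> (\<forall>\<^sub>F n in at_top.
          triangle_prob (L n) (R n) (wL n) (wR n) (u n) (u1 n) (u2 n)
          = proj_p (R n) (wL n) (wR n) (u n) (u1 n) * proj_p (R n) (wL n) (wR n) (u n) (u2 n)
            * (moment (R n) (wR n) 1 * moment (R n) (wR n) 3 / (moment (R n) (wR n) 2)^2)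
            * (1 / wL n (u n)) * (1 + \<epsilon> n) + \<eta> n)"
proof -
  define N where "N n = real (card (R n))" for n
  define pp where "pp n = proj_p (R n) (wL n) (wR n) (u n) (u1 n) * proj_p (R n) (wL n) (wR n) (u n) (u2 n)" for n
  define main where "main n = pp n * (moment (R n) (wR n) 1 * moment (R n) (wR n) 3 / (moment (R n) (wR n) 2)^2)
            * (1 / wL n (u n))" for n
  define \<eta> where "\<eta> n = triangle_prob (L n) (R n) (wL n) (wR n) (u n) (u1 n) (u2 n) - main n" for n
  obtain C where "eventually (\<lambda>n. norm (Max (wL n ` L n \<union> wR n ` R n)) \<le> C * norm (N n powr (1/2 - \<delta>))) at_top"
    using A2_max unfolding N_def by (elim landau_o.bigE) auto
  moreover obtain K where "eventually (\<lambda>n. norm (moment (R n) (wR n) 2) \<le> K * norm ((moment (R n) (wR n) 1)^2)) at_top"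
    using A2_M2 by (elim landau_o.bigE) auto
  moreover have "eventually (\<lambda>n. card (R n) \<ge> 1) at_top"
    using nR_inf by (simp add: filterlim_at_top)
  ultimately have "eventually (\<lambda>n. \<bar>\<eta> n\<bar> \<le> pp n * ((C * N n powr (1/2 - \<delta>))^2 * K / N n) \<and> 0 \<le> pp n) at_top"
  proof eventually_elim
    case (elim n)
    interpret weighted_bipartite "L n" "R n" "wL n" "wR n"
      using elim(3) finL finR posL posR A1 by unfold_locales auto
    have "wL n x \<le> C * N n powr (1/2 - \<delta>)" if "x \<in> L n" for x
    proof -
      have "wL n x \<le> Max (wL n ` L n \<union> wR n ` R n)"
        using that finL finR by (intro Max_ge) auto
      then show ?thesis using elim(1) by simp
    qed
    then show ?case
      using triangle_prob_approx[of "C * N n powr (1/2 - \<delta>)" K] elim(2) uL u1L u2L dist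
      by (auto simp: \<eta>_def main_def pp_def N_def proj_p_nonneg)
  qed
  moreover have "filterlim N at_top at_top"
    unfolding N_def by (rule filterlim_compose[OF filterlim_real_sequentially nR_inf])
  ultimately have "\<eta> \<in> o(pp)"
    using delta
    by (intro smallo_of_le_mult_vanishing[where h = "\<lambda>n. (C * N n powr (1/2 - \<delta>))^2 * K / N n"]
        tendsto_powr_sq_div_zero) (auto elim: eventually_mono)
  then show ?thesis
    by (intro exI[of _ "\<lambda>_. 0"] exI[of _ \<eta>] conjI)
      (simp_all add: \<eta>_def main_def pp_def[abs_def])
qed

end
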